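(* Let $K$ and $K_1,\dots,K_N$ be knots in $S^3$ with groups $\pi=\pi_1(S^3\setminus K)$, $\pi_i=\pi_1(S^3\setminus K_i)$ and standard meridian–longitude pairs $(m,l)$, $(m_i,l_i)$. Suppose each $K_i$ satisfies the Brumfiel–Hilden condition and that for each $i$ there is a surjective group homomorphism $f_i:\pi_i\to\pi$ with $f_i(m_i)=m$ and $f_i(l_i)=l^{d_i}$ for some $d_i\in\mathbb{Z}$. If the integers $d_1,\dots,d_N$ generate $\mathbb{Z}$ as a group, then $K$ satisfies the Brumfiel–Hilden condition.
   Context: For a group $\pi$, the Brumfiel–Hilden algebra is $H[\pi]:=\mathbb{C}[\pi]/I$, where $I$ is the two-sided ideal of the group algebra generated by all elements $g(h+h^{-1})-(h+h^{-1})g$ with $g,h\in\pi$. $H^+[\pi]\subset H[\pi]$ is the subalgebra generated by the images of all $g+g^{-1}$, $g\in\pi$. For an element $X\in H[\pi]$ which is the image of a group element, $H^+[\pi][X^{\pm1}]$ denotes the subalgebra of $H[\pi]$ generated by $H^+[\pi]$, $X$ and $X^{-1}$. A knot $K\subset S^3$ with group $\pi=\pi_1(S^3\setminus K)$ and standard (commuting) meridian $m$ and longitude $l$ is said to satisfy the Brumfiel–Hilden condition if the image $Y$ of $l$ in $H[\pi]$ lies in $H^+[\pi][X^{\pm1}]$, where $X$ is the image of $m$. *)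

theory Defs
  imports Complex_Main "HOL-Algebra.Group"
begin

definition galg :: "('g,'c) monoid_scheme \<Rightarrow> ('g \<Rightarrow> complex) set" where
  "galg G = {a. finite {x. a x \<noteq> 0} \<and> {x. a x \<noteq> 0} \<subseteq> carrier G}"

definition delta :: "'g \<Rightarrow> 'g \<Rightarrow> complex" where
  "delta g = (\<lambda>x. if x = g then 1 else 0)"

definition fadd :: "('g \<Rightarrow> complex) \<Rightarrow> ('g \<Rightarrow> complex) \<Rightarrow> 'g \<Rightarrow> complex" where
  "fadd a b = (\<lambda>x. a x + b x)"

definition fdiff :: "('g \<Rightarrow> complex) \<Rightarrow> ('g \<Rightarrow> complex) \<Rightarrow> 'g \<Rightarrow> complex" where
  "fdiff a b = (\<lambda>x. a x - b x)"

definition conv :: "('g,'c) monoid_scheme \<Rightarrow> ('g \<Rightarrow> complex) \<Rightarrow> ('g \<Rightarrow> complex) \<Rightarrow> 'g \<Rightarrow> complex" where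
  "conv G a b = (\<lambda>x. if x \<in> carrier G
       then (\<Sum>y\<in>{y. a y \<noteq> 0}. a y * b (inv\<^bsub>G\<^esub> y \<otimes>\<^bsub>G\<^esub> x)) else 0)"

inductive_set bh_ideal :: "('g,'c) monoid_scheme \<Rightarrow> ('g \<Rightarrow> complex) set"
  for G :: "('g,'c) monoid_scheme" where
  gen: "g \<in> carrier G \<Longrightarrow> h \<in> carrier G \<Longrightarrow>
     fdiff (conv G (delta g) (fadd (delta h) (delta (inv\<^bsub>G\<^esub> h))))
       (conv G (fadd (delta h) (delta (inv\<^bsub>G\<^esub> h))) (delta g)) \<in> bh_ideal G"
| zero: "(\<lambda>_. 0) \<in> bh_ideal G"
| add: "a \<in> bh_ideal G \<Longrightarrow> b \<in> bh_ideal G \<Longrightarrow> fadd a b \<in> bh_ideal G"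
| smult: "a \<in> bh_ideal G \<Longrightarrow> (\<lambda>x. c * a x) \<in> bh_ideal G"
| lmult: "a \<in> bh_ideal G \<Longrightarrow> r \<in> galg G \<Longrightarrow> conv G r a \<in> bh_ideal G"
| rmult: "a \<in> bh_ideal G \<Longrightarrow> r \<in> galg G \<Longrightarrow> conv G a r \<in> bh_ideal G"

text \<open>Preimage in C[G] of the subalgebra H^+[G][X^{+-1}] of H[G] = C[G]/I, X the image of m:
  the subalgebra of C[G] generated by I, all g + g^-1, m and m^-1.\<close>
inductive_set bh_plus_X :: "('g,'c) monoid_scheme \<Rightarrow> 'g \<Rightarrow> ('g \<Rightarrow> complex) set"
  for G :: "('g,'c) monoid_scheme" and m :: 'g where
  ideal: "a \<in> bh_ideal G \<Longrightarrow> a \<in> bh_plus_X G m"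
| sym: "g \<in> carrier G \<Longrightarrow> fadd (delta g) (delta (inv\<^bsub>G\<^esub> g)) \<in> bh_plus_X G m"
| X: "delta m \<in> bh_plus_X G m"
| Xinv: "delta (inv\<^bsub>G\<^esub> m) \<in> bh_plus_X G m"
| one: "delta \<one>\<^bsub>G\<^esub> \<in> bh_plus_X G m"
| add: "a \<in> bh_plus_X G m \<Longrightarrow> b \<in> bh_plus_X G m \<Longrightarrow> fadd a b \<in> bh_plus_X G m"
| smult: "a \<in> bh_plus_X G m \<Longrightarrow> (\<lambda>x. c * a x) \<in> bh_plus_X G m"
| mult: "a \<in> bh_plus_X G m \<Longrightarrow> b \<in> bh_plus_X G m \<Longrightarrow> conv G a b \<in> bh_plus_X G m"

text \<open>Brumfiel--Hilden condition: the image Y of l in H[G] lies in H^+[G][X^{+-1}].\<close>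
definition BH_condition :: "('g,'c) monoid_scheme \<Rightarrow> 'g \<Rightarrow> 'g \<Rightarrow> bool" where
  "BH_condition G m l \<longleftrightarrow> delta l \<in> bh_plus_X G m"

text \<open>Abstract stand-in for (knot group, meridian, longitude): a group with commuting m, l.\<close>
definition peripheral_pair :: "('g,'c) monoid_scheme \<Rightarrow> 'g \<Rightarrow> 'g \<Rightarrow> bool" where
  "peripheral_pair G m l \<longleftrightarrow> group G \<and> m \<in> carrier G \<and> l \<in> carrier G
      \<and> m \<otimes>\<^bsub>G\<^esub> l = l \<otimes>\<^bsub>G\<^esub> m"

end

theory Submission
  imports Defs
begin

text \<open>
  A group homomorphism \<open>f : H \<rightarrow> G\<close> extends linearly to an algebra homomorphism
  \<open>f\<^sub>* : \<complex>[H] \<rightarrow> \<complex>[G]\<close>, which sends the generators \<open>g(h + h\<^sup>-\<^sup>1) - (h + h\<^sup>-\<^sup>1)g\<close> of the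
  Brumfiel--Hilden ideal of \<open>H\<close> to generators of the ideal of \<open>G\<close>, and each \<open>g + g\<^sup>-\<^sup>1\<close> to
  \<open>f g + (f g)\<^sup>-\<^sup>1\<close>. Hence \<open>f\<^sub>i\<^sub>*\<close> carries \<open>H\<^sup>+[\<pi>\<^sub>i][X\<^sub>i\<^sup>\<plusminus>\<^sup>1]\<close> into \<open>H\<^sup>+[\<pi>][X\<^sup>\<plusminus>\<^sup>1]\<close>, and
  the Brumfiel--Hilden condition for \<open>K\<^sub>i\<close> puts \<open>f\<^sub>i(l\<^sub>i) = l^d\<^sub>i\<close> into \<open>H\<^sup>+[\<pi>][X\<^sup>\<plusminus>\<^sup>1]\<close>.
  The exponents \<open>k\<close> with \<open>l^k\<close> in this subalgebra form a subgroup of \<open>\<int>\<close>, since the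
  subalgebra is closed under products and \<open>g\<^sup>-\<^sup>1 = (g + g\<^sup>-\<^sup>1) - g\<close>. It contains all \<open>d\<^sub>i\<close>,
  hence \<open>1\<close>.
\<close>

section \<open>The group algebra\<close>

abbreviation supp :: "('g \<Rightarrow> complex) \<Rightarrow> 'g set" where
  "supp a \<equiv> {x. a x \<noteq> 0}"

lemma galg_iff: "a \<in> galg G \<longleftrightarrow> finite (supp a) \<and> supp a \<subseteq> carrier G"
  by (simp add: galg_def)

lemma galgI:
  assumes "supp a \<subseteq> S" "finite S" "S \<subseteq> carrier G"
  shows "a \<in> galg G"
  using assms finite_subset unfolding galg_iff by blast

lemma finite_supp_galg: "a \<in> galg G \<Longrightarrow> finite (supp a)"
  by (simp add: galg_iff)

lemma finite_supp_delta [simp]: "finite (supp (delta g))"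
  by (simp add: delta_def)

lemma galg_delta: "g \<in> carrier G \<Longrightarrow> delta g \<in> galg G"
  by (auto simp: galg_iff delta_def)

lemma galg_zero: "(\<lambda>_. 0) \<in> galg G"
  by (simp add: galg_iff)

lemma galg_fadd: "a \<in> galg G \<Longrightarrow> b \<in> galg G \<Longrightarrow> fadd a b \<in> galg G"
  by (rule galgI[of _ "supp a \<union> supp b"]) (auto simp: fadd_def galg_iff)

lemma galg_fdiff: "a \<in> galg G \<Longrightarrow> b \<in> galg G \<Longrightarrow> fdiff a b \<in> galg G"
  by (rule galgI[of _ "supp a \<union> supp b"]) (auto simp: fdiff_def galg_iff)

lemma galg_smult: "a \<in> galg G \<Longrightarrow> (\<lambda>x. c * a x) \<in> galg G"
  by (rule galgI[of _ "supp a"]) (auto simp: galg_iff)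

lemma (in group) conv_eq_double_sum:
  assumes "finite A" "finite B" "supp a \<subseteq> A" "supp b \<subseteq> B" "A \<subseteq> carrier G" "B \<subseteq> carrier G"
  shows "conv G a b x = (\<Sum>y\<in>A. \<Sum>z\<in>B. a y * b z * (if y \<otimes> z = x then 1 else 0))"
proof (cases "x \<in> carrier G")
  case True
  have inner: "(\<Sum>z\<in>B. a y * b z * (if y \<otimes> z = x then 1 else 0)) = a y * b (inv y \<otimes> x)"
    if y: "y \<in> carrier G" for y
  proof -
    have "y \<otimes> z = x \<longleftrightarrow> inv y \<otimes> x = z" if "z \<in> carrier G" for z
      using that y True by (metis inv_solve_left)
    then have "(\<Sum>z\<in>B. a y * b z * (if y \<otimes> z = x then 1 else 0))
        = (\<Sum>z\<in>B. if inv y \<otimes> x = z then a y * b z else 0)"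
      by (intro sum.cong) (use assms(6) in auto)
    also have "\<dots> = a y * b (inv y \<otimes> x)"
      using assms(2,4) by auto
    finally show ?thesis .
  qed
  have "conv G a b x = (\<Sum>y\<in>supp a. a y * b (inv y \<otimes> x))"
    using True by (simp add: conv_def)
  also have "\<dots> = (\<Sum>y\<in>A. a y * b (inv y \<otimes> x))"
    by (rule sum.mono_neutral_left) (use assms(1,3) in auto)
  also have "\<dots> = (\<Sum>y\<in>A. \<Sum>z\<in>B. a y * b z * (if y \<otimes> z = x then 1 else 0))"
    by (rule sum.cong) (use inner assms(5) in auto)
  finally show ?thesis .
next
  case False
  then have "y \<otimes> z \<noteq> x" if "y \<in> A" "z \<in> B" for y z
    using that assms(5,6) by blast
  with False show ?thesis
    by (simp add: conv_def)
qed

lemma (in group) supp_conv_subset: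
  assumes "a \<in> galg G" "b \<in> galg G"
  shows "supp (conv G a b) \<subseteq> (\<lambda>(y, z). y \<otimes> z) ` (supp a \<times> supp b)"
proof
  fix w assume w: "w \<in> supp (conv G a b)"
  have "conv G a b w = (\<Sum>y\<in>supp a. \<Sum>z\<in>supp b. a y * b z * (if y \<otimes> z = w then 1 else 0))"
    by (rule conv_eq_double_sum) (use assms in \<open>auto simp: galg_iff\<close>)
  with w have "(\<Sum>y\<in>supp a. \<Sum>z\<in>supp b. a y * b z * (if y \<otimes> z = w then 1 else 0)) \<noteq> 0"
    by simp
  then obtain y where "y \<in> supp a"
    and "(\<Sum>z\<in>supp b. a y * b z * (if y \<otimes> z = w then 1 else 0)) \<noteq> 0"
    by (rule sum.not_neutral_contains_not_neutral)
  from this(2) obtain z where "z \<in> supp b" "a y * b z * (if y \<otimes> z = w then 1 else 0) \<noteq> 0"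
    by (rule sum.not_neutral_contains_not_neutral)
  then have "y \<in> supp a" "z \<in> supp b" "y \<otimes> z = w"
    using \<open>y \<in> supp a\<close> by (auto split: if_splits)
  then show "w \<in> (\<lambda>(y, z). y \<otimes> z) ` (supp a \<times> supp b)"
    by force
qed

lemma (in group) galg_conv:
  assumes "a \<in> galg G" "b \<in> galg G"
  shows "conv G a b \<in> galg G"
proof (rule galgI[OF supp_conv_subset[OF assms]])
  show "finite ((\<lambda>(y, z). y \<otimes> z) ` (supp a \<times> supp b))"
    using assms by (simp add: galg_iff)
  show "(\<lambda>(y, z). y \<otimes> z) ` (supp a \<times> supp b) \<subseteq> carrier G"
    using assms by (auto simp: galg_iff)
qed

lemma (in group) conv_delta:
  assumes "g \<in> carrier G" "h \<in> carrier G"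
  shows "conv G (delta g) (delta h) = delta (g \<otimes> h)"
proof
  fix x
  have "conv G (delta g) (delta h) x
      = (\<Sum>y\<in>{g}. \<Sum>z\<in>{h}. delta g y * delta h z * (if y \<otimes> z = x then 1 else 0))"
    by (rule conv_eq_double_sum) (use assms in \<open>auto simp: delta_def\<close>)
  then show "conv G (delta g) (delta h) x = delta (g \<otimes> h) x"
    by (simp add: delta_def)
qed

lemma (in group) bh_ideal_subset_galg: "a \<in> bh_ideal G \<Longrightarrow> a \<in> galg G"
  by (induction rule: bh_ideal.induct)
    (auto intro!: galg_fdiff galg_conv galg_fadd galg_delta galg_zero galg_smult)

lemma (in group) bh_plus_X_subset_galg:
  assumes "m \<in> carrier G"
  shows "a \<in> bh_plus_X G m \<Longrightarrow> a \<in> galg G"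
  by (induction rule: bh_plus_X.induct)
    (use assms in \<open>auto intro!: galg_fadd galg_delta galg_smult galg_conv intro: bh_ideal_subset_galg\<close>)

section \<open>Push-forward along a group homomorphism\<close>

definition pushforward :: "('h \<Rightarrow> 'g) \<Rightarrow> ('h \<Rightarrow> complex) \<Rightarrow> 'g \<Rightarrow> complex" where
  "pushforward f a = (\<lambda>y. \<Sum>x\<in>{x. a x \<noteq> 0 \<and> f x = y}. a x)"

lemma pushforward_eq_sum:
  assumes "finite S" "supp a \<subseteq> S"
  shows "pushforward f a y = (\<Sum>x\<in>{x\<in>S. f x = y}. a x)"
  unfolding pushforward_def by (rule sum.mono_neutral_left) (use assms in auto)

lemma supp_pushforward_subset: "supp (pushforward f a) \<subseteq> f ` supp a"
proof
  fix y assume "y \<in> supp (pushforward f a)"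
  then have "(\<Sum>x\<in>{x. a x \<noteq> 0 \<and> f x = y}. a x) \<noteq> 0"
    by (simp add: pushforward_def)
  then obtain x where "a x \<noteq> 0" "f x = y"
    using sum.not_neutral_contains_not_neutral by blast
  then show "y \<in> f ` supp a"
    by blast
qed

lemma sum_pushforward:
  assumes "finite S" "supp a \<subseteq> S"
  shows "(\<Sum>u\<in>f ` S. pushforward f a u * R u) = (\<Sum>y\<in>S. a y * R (f y))"
proof -
  have "(\<Sum>y\<in>S. a y * R (f y)) = (\<Sum>u\<in>f ` S. \<Sum>y\<in>{y\<in>S. f y = u}. a y * R (f y))"
    by (rule sum.image_gen[OF assms(1)])
  also have "\<dots> = (\<Sum>u\<in>f ` S. pushforward f a u * R u)"
    by (rule sum.cong) (auto simp: pushforward_eq_sum[OF assms] sum_distrib_right)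
  finally show ?thesis ..
qed

lemma galg_pushforward:
  assumes "a \<in> galg H" "f ` carrier H \<subseteq> carrier G"
  shows "pushforward f a \<in> galg G"
  by (rule galgI[OF supp_pushforward_subset]) (use assms in \<open>auto simp: galg_iff\<close>)

lemma pushforward_delta: "pushforward f (delta g) = delta (f g)"
proof
  fix y
  have "{x. delta g x \<noteq> 0 \<and> f x = y} = (if f g = y then {g} else {})"
    by (auto simp: delta_def)
  then show "pushforward f (delta g) y = delta (f g) y"
    by (simp add: pushforward_def delta_def)
qed

lemma pushforward_zero: "pushforward f (\<lambda>_. 0) = (\<lambda>_. 0)"
  by (simp add: pushforward_def)

lemma pushforward_fadd:
  assumes "finite (supp a)" "finite (supp b)"
  shows "pushforward f (fadd a b) = fadd (pushforward f a) (pushforward f b)"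
proof
  fix y
  have "supp (fadd a b) \<subseteq> supp a \<union> supp b"
    by (auto simp: fadd_def)
  then show "pushforward f (fadd a b) y = fadd (pushforward f a) (pushforward f b) y"
    using assms by (simp add: pushforward_eq_sum[of "supp a \<union> supp b"] fadd_def sum.distrib)
qed

lemma pushforward_fdiff:
  assumes "finite (supp a)" "finite (supp b)"
  shows "pushforward f (fdiff a b) = fdiff (pushforward f a) (pushforward f b)"
proof
  fix y
  have "supp (fdiff a b) \<subseteq> supp a \<union> supp b"
    by (auto simp: fdiff_def)
  then show "pushforward f (fdiff a b) y = fdiff (pushforward f a) (pushforward f b) y"
    using assms by (simp add: pushforward_eq_sum[of "supp a \<union> supp b"] fdiff_def sum_subtractf)
qed

lemma pushforward_smult:
  assumes "finite (supp a)"
  shows "pushforward f (\<lambda>x. c * a x) = (\<lambda>y. c * pushforward f a y)"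
proof
  fix y
  have "supp (\<lambda>x. c * a x) \<subseteq> supp a"
    by auto
  then show "pushforward f (\<lambda>x. c * a x) y = c * pushforward f a y"
    using assms by (simp add: pushforward_eq_sum[of "supp a"] sum_distrib_left)
qed

context group_hom
begin

lemma pushforward_conv_eq_double_sum:
  assumes "a \<in> galg G" "b \<in> galg G"
  shows "pushforward h (conv G a b) x
       = (\<Sum>y\<in>supp a. \<Sum>z\<in>supp b. a y * b z * (if h (y \<otimes> z) = x then 1 else 0))"
proof -
  define C where "C = (\<lambda>(y, z). y \<otimes> z) ` (supp a \<times> supp b)"
  have fin: "finite (supp a)" "finite (supp b)" "finite C"
    using assms by (simp_all add: C_def galg_iff)
  have "pushforward h (conv G a b) x = (\<Sum>w\<in>{w\<in>C. h w = x}. conv G a b w)"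
    using G.supp_conv_subset[OF assms] fin by (simp add: pushforward_eq_sum C_def)
  also have "\<dots> = (\<Sum>w\<in>{w\<in>C. h w = x}. \<Sum>y\<in>supp a. \<Sum>z\<in>supp b.
                     a y * b z * (if y \<otimes> z = w then 1 else 0))"
    using assms fin by (simp add: G.conv_eq_double_sum galg_iff)
  also have "\<dots> = (\<Sum>y\<in>supp a. \<Sum>z\<in>supp b. \<Sum>w\<in>{w\<in>C. h w = x}.
                     a y * b z * (if y \<otimes> z = w then 1 else 0))"
    by (subst sum.swap) (rule sum.cong[OF refl], rule sum.swap)
  also have "\<dots> = (\<Sum>y\<in>supp a. \<Sum>z\<in>supp b. a y * b z * (if h (y \<otimes> z) = x then 1 else 0))"
  proof (intro sum.cong refl)
    fix y z assume "y \<in> supp a" "z \<in> supp b"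
    then have "y \<otimes> z \<in> C"
      by (force simp: C_def)
    then show "(\<Sum>w\<in>{w\<in>C. h w = x}. a y * b z * (if y \<otimes> z = w then 1 else 0))
             = a y * b z * (if h (y \<otimes> z) = x then 1 else 0)"
      using fin(3) by (simp add: sum.delta if_distrib[of "(*) _"] cong: if_cong)
  qed
  finally show ?thesis .
qed

lemma conv_pushforward_eq_double_sum:
  assumes "a \<in> galg G" "b \<in> galg G"
  shows "conv H (pushforward h a) (pushforward h b) x
       = (\<Sum>y\<in>supp a. \<Sum>z\<in>supp b. a y * b z * (if h y \<otimes>\<^bsub>H\<^esub> h z = x then 1 else 0))"
proof -
  have fin: "finite (supp a)" "finite (supp b)"
    and sub: "supp a \<subseteq> carrier G" "supp b \<subseteq> carrier G"
    using assms by (simp_all add: galg_iff)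
  have "conv H (pushforward h a) (pushforward h b) x
      = (\<Sum>u\<in>h ` supp a. \<Sum>v\<in>h ` supp b.
           pushforward h a u * pushforward h b v * (if u \<otimes>\<^bsub>H\<^esub> v = x then 1 else 0))"
    by (rule H.conv_eq_double_sum)
      (use fin sub supp_pushforward_subset[of h a] supp_pushforward_subset[of h b] in auto)
  also have "\<dots> = (\<Sum>u\<in>h ` supp a. pushforward h a u *
                    (\<Sum>v\<in>h ` supp b. pushforward h b v * (if u \<otimes>\<^bsub>H\<^esub> v = x then 1 else 0)))"
    by (simp add: sum_distrib_left mult.assoc)
  also have "\<dots> = (\<Sum>y\<in>supp a. a y *
                    (\<Sum>z\<in>supp b. b z * (if h y \<otimes>\<^bsub>H\<^esub> h z = x then 1 else 0)))"
    using fin by (simp only: sum_pushforward subset_refl)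
  finally show ?thesis
    by (simp add: sum_distrib_left mult.assoc)
qed

lemma pushforward_conv:
  assumes "a \<in> galg G" "b \<in> galg G"
  shows "pushforward h (conv G a b) = conv H (pushforward h a) (pushforward h b)"
proof
  fix x
  have "h (y \<otimes> z) = h y \<otimes>\<^bsub>H\<^esub> h z" if "y \<in> supp a" "z \<in> supp b" for y z
    using that assms by (intro hom_mult) (auto simp: galg_iff)
  then show "pushforward h (conv G a b) x = conv H (pushforward h a) (pushforward h b) x"
    using assms by (simp add: pushforward_conv_eq_double_sum conv_pushforward_eq_double_sum)
qed

lemma pushforward_delta_sym:
  "g \<in> carrier G \<Longrightarrow> pushforward h (fadd (delta g) (delta (inv g)))
     = fadd (delta (h g)) (delta (inv\<^bsub>H\<^esub> (h g)))"
  by (simp add: pushforward_fadd pushforward_delta)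

lemma pushforward_bh_ideal: "a \<in> bh_ideal G \<Longrightarrow> pushforward h a \<in> bh_ideal H"
proof (induction rule: bh_ideal.induct)
  case (gen g k)
  let ?s = "fadd (delta k) (delta (inv k))"
  have s: "?s \<in> galg G" and g: "delta g \<in> galg G"
    using gen by (auto intro!: galg_fadd galg_delta)
  have "pushforward h (fdiff (conv G (delta g) ?s) (conv G ?s (delta g)))
      = fdiff (conv H (delta (h g)) (fadd (delta (h k)) (delta (inv\<^bsub>H\<^esub> (h k)))))
              (conv H (fadd (delta (h k)) (delta (inv\<^bsub>H\<^esub> (h k)))) (delta (h g)))"
    by (simp only: pushforward_fdiff[OF finite_supp_galg[OF G.galg_conv[OF g s]]
          finite_supp_galg[OF G.galg_conv[OF s g]]] s g
        pushforward_conv pushforward_delta_sym[OF gen(2)] pushforward_delta)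
  then show ?case
    using gen by (simp add: bh_ideal.gen)
next
  case (add a b)
  then have "a \<in> galg G" "b \<in> galg G"
    using G.bh_ideal_subset_galg by blast+
  with add.IH show ?case
    by (simp add: pushforward_fadd finite_supp_galg bh_ideal.add)
next
  case (smult a c)
  then have "a \<in> galg G"
    using G.bh_ideal_subset_galg by blast
  with smult.IH show ?case
    by (simp add: pushforward_smult finite_supp_galg bh_ideal.smult)
next
  case (lmult a r)
  then have "a \<in> galg G"
    using G.bh_ideal_subset_galg by blast
  with lmult show ?case
    by (simp add: pushforward_conv galg_pushforward hom_closed image_subset_iff bh_ideal.lmult)
next
  case (rmult a r)
  then have "a \<in> galg G"
    using G.bh_ideal_subset_galg by blast
  with rmult show ?case
    by (simp add: pushforward_conv galg_pushforward hom_closed image_subset_iff bh_ideal.rmult)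
qed (simp add: pushforward_zero bh_ideal.zero)

lemma pushforward_bh_plus_X:
  assumes "m \<in> carrier G"
  shows "a \<in> bh_plus_X G m \<Longrightarrow> pushforward h a \<in> bh_plus_X H (h m)"
proof (induction rule: bh_plus_X.induct)
  case (ideal a)
  then show ?case
    by (simp add: pushforward_bh_ideal bh_plus_X.ideal)
next
  case (sym g)
  then show ?case
    by (simp add: pushforward_delta_sym bh_plus_X.sym)
next
  case Xinv
  then show ?case
    using assms by (simp add: pushforward_delta bh_plus_X.Xinv)
next
  case (add a b)
  then have "a \<in> galg G" "b \<in> galg G"
    using assms G.bh_plus_X_subset_galg by blast+
  with add.IH show ?case
    by (simp add: pushforward_fadd finite_supp_galg bh_plus_X.add)
next
  case (smult a c)
  then have "a \<in> galg G"
    using assms G.bh_plus_X_subset_galg by blast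
  with smult.IH show ?case
    by (simp add: pushforward_smult finite_supp_galg bh_plus_X.smult)
next
  case (mult a b)
  then have "a \<in> galg G" "b \<in> galg G"
    using assms G.bh_plus_X_subset_galg by blast+
  with mult.IH show ?case
    by (simp add: pushforward_conv bh_plus_X.mult)
qed (simp_all add: pushforward_delta bh_plus_X.X bh_plus_X.one)

end

section \<open>Powers of an element in \<open>H\<^sup>+[G][X\<^sup>\<plusminus>\<^sup>1]\<close>\<close>

context group
begin

lemma delta_mult_in_bh_plus_X:
  "g \<in> carrier G \<Longrightarrow> k \<in> carrier G \<Longrightarrow> delta g \<in> bh_plus_X G m \<Longrightarrow> delta k \<in> bh_plus_X G m
    \<Longrightarrow> delta (g \<otimes> k) \<in> bh_plus_X G m"
  by (metis bh_plus_X.mult conv_delta)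

lemma delta_inv_in_bh_plus_X:
  assumes "g \<in> carrier G" "delta g \<in> bh_plus_X G m"
  shows "delta (inv g) \<in> bh_plus_X G m"
proof -
  have "delta (inv g) = fadd (fadd (delta g) (delta (inv g))) (\<lambda>x. (-1) * delta g x)"
    by (simp add: fadd_def)
  also have "\<dots> \<in> bh_plus_X G m"
    using assms by (intro bh_plus_X.add bh_plus_X.sym bh_plus_X.smult)
  finally show ?thesis .
qed

lemma delta_int_pow_mult_in_bh_plus_X:
  assumes "g \<in> carrier G" "delta (g [^] (k::int)) \<in> bh_plus_X G m"
  shows "delta (g [^] (j * k)) \<in> bh_plus_X G m"
proof -
  have nat: "delta (g [^] (int n * k)) \<in> bh_plus_X G m" for n
  proof (induction n)
    case (Suc n)
    have "int (Suc n) * k = int n * k + k"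
      by (simp add: algebra_simps)
    then have "g [^] (int (Suc n) * k) = g [^] (int n * k) \<otimes> g [^] k"
      using assms(1) by (simp only: int_pow_mult)
    then show ?case
      using Suc assms by (simp add: delta_mult_in_bh_plus_X)
  qed (simp add: bh_plus_X.one)
  show ?thesis
  proof (cases "j \<ge> 0")
    case True
    then show ?thesis
      using nat[of "nat j"] by simp
  next
    case False
    then have "j * k = - (int (nat (- j)) * k)"
      by simp
    then have "g [^] (j * k) = inv (g [^] (int (nat (- j)) * k))"
      using assms(1) by (simp only: int_pow_neg)
    then show ?thesis
      using delta_inv_in_bh_plus_X[OF int_pow_closed[OF assms(1)] nat] by (simp only:)
  qed
qed

lemma delta_int_pow_sum_in_bh_plus_X:
  assumes "g \<in> carrier G" "finite I" "\<And>i. i \<in> I \<Longrightarrow> delta (g [^] (k i :: int)) \<in> bh_plus_X G m"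
  shows "delta (g [^] (\<Sum>i\<in>I. k i)) \<in> bh_plus_X G m"
  using assms(2,3)
proof (induction I rule: finite_induct)
  case (insert i I)
  have "g [^] (\<Sum>i\<in>insert i I. k i) = g [^] k i \<otimes> g [^] (\<Sum>i\<in>I. k i)"
    using insert.hyps assms(1) by (simp add: int_pow_mult)
  then show ?case
    using insert assms(1) by (simp add: delta_mult_in_bh_plus_X)
qed (simp add: bh_plus_X.one)

end

theorem mainTheorem5:
  fixes G :: "('g,'c) monoid_scheme" and m l :: 'g
    and Gs :: "nat \<Rightarrow> ('h,'e) monoid_scheme" and ms ls :: "nat \<Rightarrow> 'h"
    and f :: "nat \<Rightarrow> 'h \<Rightarrow> 'g" and d :: "nat \<Rightarrow> int" and N :: nat
  assumes "peripheral_pair G m l"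
    and "\<And>i. i \<in> {1..N} \<Longrightarrow> peripheral_pair (Gs i) (ms i) (ls i)"
    and "\<And>i. i \<in> {1..N} \<Longrightarrow> BH_condition (Gs i) (ms i) (ls i)"
    and "\<And>i. i \<in> {1..N} \<Longrightarrow> f i \<in> hom (Gs i) G"
    and "\<And>i. i \<in> {1..N} \<Longrightarrow> f i ` carrier (Gs i) = carrier G"
    and "\<And>i. i \<in> {1..N} \<Longrightarrow> f i (ms i) = m"
    and "\<And>i. i \<in> {1..N} \<Longrightarrow> f i (ls i) = l [^]\<^bsub>G\<^esub> d i"
    and "\<forall>z::int. \<exists>c::nat \<Rightarrow> int. z = (\<Sum>i=1..N. c i * d i)"
  shows "BH_condition G m l"
proof -
  have G: "group G" and l: "l \<in> carrier G"
    using assms(1) by (auto simp: peripheral_pair_def)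
  have d: "delta (l [^]\<^bsub>G\<^esub> d i) \<in> bh_plus_X G m" if i: "i \<in> {1..N}" for i
  proof -
    have "group_hom (Gs i) G (f i)" "ms i \<in> carrier (Gs i)"
      using G assms(2,4)[OF i] by (auto simp: peripheral_pair_def group_hom_def group_hom_axioms_def)
    from group_hom.pushforward_bh_plus_X[OF this] assms(3)[OF i]
    have "pushforward (f i) (delta (ls i)) \<in> bh_plus_X G (f i (ms i))"
      by (simp add: BH_condition_def)
    then show ?thesis
      by (simp add: pushforward_delta assms(6,7)[OF i])
  qed
  obtain c where c: "1 = (\<Sum>i=1..N. c i * d i)"
    using assms(8) by blast
  have "delta (l [^]\<^bsub>G\<^esub> (1::int)) \<in> bh_plus_X G m"
    unfolding c
    by (intro group.delta_int_pow_sum_in_bh_plus_X[OF G l] group.delta_int_pow_mult_in_bh_plus_X[OF G l] d)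
      auto
  then show ?thesis
    using G l by (simp add: BH_condition_def group.int_pow_1)
qed

end
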